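(* Let $F=(n_F)_{n\ge1}\in\mathcal{T}_\lambda$, with functions $\lambda_K,\lambda_M$ as in the definition of $\mathcal{T}_\lambda$. Then for all integers $n\ge2$ and $1\le k\le n-1$, $$\binom{n}{k}_F=\lambda_K(k,n-k)\binom{n-1}{k-1}_F+\lambda_M(k,n-k)\binom{n-1}{k}_F,$$ and $\binom{n}{n}_F=\binom{n}{0}_F=1$.
   Context: Throughout, $\mathbb{N}=\{1,2,\dots\}$. The family $\mathcal{T}_\lambda$ consists of sequences $F=(n_F)_{n\ge1}$ of natural numbers for which there exist functions $\lambda_K,\lambda_M:\mathbb{N}\times\mathbb{N}\to\mathbb{N}\cup\{0\}$ such that $(k+m)_F=\lambda_K(k,m)\,k_F+\lambda_M(k,m)\,m_F$ for all $k,m\in\mathbb{N}$. We write $n_F!=n_F(n-1)_F\cdots1_F$, with $0_F!=1$, and $\binom{n}{m}_F=\frac{n_F!}{m_F!(n-m)_F!}$. *)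

theory Defs
  imports Complex_Main
begin

text \<open>A sequence F = (n_F) of natural numbers is modelled as F :: nat => nat,
  with only the values at n >= 1 relevant (required to be >= 1).\<close>

definition in_T_lambda_with :: "(nat \<Rightarrow> nat) \<Rightarrow> (nat \<Rightarrow> nat \<Rightarrow> nat) \<Rightarrow> (nat \<Rightarrow> nat \<Rightarrow> nat) \<Rightarrow> bool" where
  "in_T_lambda_with F lK lM \<longleftrightarrow>
     (\<forall>n\<ge>1. F n \<ge> 1) \<and>
     (\<forall>k\<ge>1. \<forall>m\<ge>1. F (k + m) = lK k m * F k + lM k m * F m)"

definition T_lambda :: "(nat \<Rightarrow> nat) set" where
  "T_lambda = {F. \<exists>lK lM. in_T_lambda_with F lK lM}"

definition F_fact :: "(nat \<Rightarrow> nat) \<Rightarrow> nat \<Rightarrow> nat" where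
  "F_fact F n = (\<Prod>i=1..n. F i)"

definition F_binom :: "(nat \<Rightarrow> nat) \<Rightarrow> nat \<Rightarrow> nat \<Rightarrow> rat" where
  "F_binom F n m = of_nat (F_fact F n) / (of_nat (F_fact F m) * of_nat (F_fact F (n - m)))"

end

theory Submission
  imports Defs
begin

text \<open>The recurrence follows from two absorption identities,
  F(n) [n-1, k-1] = F(k) [n, k] and F(n) [n-1, k] = F(n-k) [n, k],
  which come from peeling off the top factor of each F-factorial.
  Combining them with F(n) = a F(k) + b F(n-k) and cancelling F(n) gives Pascal's rule.\<close>

lemma F_fact_Suc: "F_fact F (Suc n) = F (Suc n) * F_fact F n"
  unfolding F_fact_def by (simp add: prod.nat_ivl_Suc')

lemma F_fact_pred: "n \<ge> 1 \<Longrightarrow> F_fact F n = F n * F_fact F (n - 1)"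
  using F_fact_Suc[of F "n - 1"] by simp

lemma F_fact_pos: "\<forall>i\<ge>1. 0 < F i \<Longrightarrow> 0 < F_fact F n"
  unfolding F_fact_def by (auto intro!: prod_pos)

lemma F_binom_self: "\<forall>i\<ge>1. 0 < F i \<Longrightarrow> F_binom F n n = 1"
  using F_fact_pos[of F n] by (simp add: F_binom_def F_fact_def)

lemma F_binom_0: "\<forall>i\<ge>1. 0 < F i \<Longrightarrow> F_binom F n 0 = 1"
  using F_fact_pos[of F n] by (simp add: F_binom_def F_fact_def)

lemma F_binom_absorb_left:
  assumes pos: "\<forall>i\<ge>1. 0 < F i" and "1 \<le> k" "k \<le> n"
  shows "of_nat (F n) * F_binom F (n - 1) (k - 1) = of_nat (F k) * F_binom F n k"
proof -
  have "n - 1 - (k - 1) = n - k" using assms by simp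
  moreover have "F_fact F n = F n * F_fact F (n - 1)" "F_fact F k = F k * F_fact F (k - 1)"
    using assms by (simp_all add: F_fact_pred)
  moreover have "F k \<noteq> 0" "F_fact F (k - 1) \<noteq> 0" "F_fact F (n - k) \<noteq> 0"
    using pos assms F_fact_pos[OF pos] by (auto simp: gr0_conv_Suc)
  ultimately show ?thesis by (simp add: F_binom_def field_simps)
qed

lemma F_binom_absorb_right:
  assumes pos: "\<forall>i\<ge>1. 0 < F i" and "k < n"
  shows "of_nat (F n) * F_binom F (n - 1) k = of_nat (F (n - k)) * F_binom F n k"
proof -
  have "n - 1 - k = n - k - 1" by simp
  moreover have "F_fact F n = F n * F_fact F (n - 1)"
      "F_fact F (n - k) = F (n - k) * F_fact F (n - k - 1)"
    using assms by (simp_all add: F_fact_pred)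
  moreover have "F (n - k) \<noteq> 0" "F_fact F k \<noteq> 0" "F_fact F (n - k - 1) \<noteq> 0"
    using pos assms F_fact_pos[OF pos] by (auto simp: gr0_conv_Suc)
  ultimately show ?thesis by (simp add: F_binom_def field_simps)
qed

lemma F_binom_pascal:
  assumes pos: "\<forall>i\<ge>1. 0 < F i" and "1 \<le> k" "k < n"
    and split: "F n = a * F k + b * F (n - k)"
  shows "F_binom F n k = of_nat a * F_binom F (n - 1) (k - 1) + of_nat b * F_binom F (n - 1) k"
proof -
  have "of_nat (F n) * F_binom F n k
      = of_nat a * (of_nat (F k) * F_binom F n k) + of_nat b * (of_nat (F (n - k)) * F_binom F n k)"
    by (simp add: split algebra_simps)
  also have "\<dots> = of_nat (F n)
      * (of_nat a * F_binom F (n - 1) (k - 1) + of_nat b * F_binom F (n - 1) k)"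
    using F_binom_absorb_left[OF pos \<open>1 \<le> k\<close>] F_binom_absorb_right[OF pos \<open>k < n\<close>]
      \<open>k < n\<close> by (simp add: algebra_simps)
  moreover have "F n \<noteq> 0"
    using pos \<open>k < n\<close> by simp
  ultimately show ?thesis by simp
qed

theorem corollary3:
  fixes F :: "nat \<Rightarrow> nat" and lK lM :: "nat \<Rightarrow> nat \<Rightarrow> nat"
  assumes "in_T_lambda_with F lK lM"
  shows "(\<forall>n k. n \<ge> 2 \<and> 1 \<le> k \<and> k \<le> n - 1 \<longrightarrow>
            F_binom F n k = of_nat (lK k (n - k)) * F_binom F (n - 1) (k - 1)
                          + of_nat (lM k (n - k)) * F_binom F (n - 1) k)
       \<and> (\<forall>n. F_binom F n n = 1 \<and> F_binom F n 0 = 1)"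
proof -
  have pos: "\<forall>i\<ge>1. 0 < F i"
    and rec: "\<And>k m. 1 \<le> k \<Longrightarrow> 1 \<le> m \<Longrightarrow> F (k + m) = lK k m * F k + lM k m * F m"
    using assms unfolding in_T_lambda_with_def by (auto simp: Suc_le_eq)
  have "F_binom F n k = of_nat (lK k (n - k)) * F_binom F (n - 1) (k - 1)
                      + of_nat (lM k (n - k)) * F_binom F (n - 1) k"
    if "1 \<le> k" "k < n" for n k
  proof (rule F_binom_pascal[OF pos that])
    show "F n = lK k (n - k) * F k + lM k (n - k) * F (n - k)"
      using rec[of k "n - k"] that by simp
  qed
  then show ?thesis
    using F_binom_self[OF pos] F_binom_0[OF pos] by auto
qed

end
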